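(* Let $F$ be WORDER or WMAJORITY with weights $w_1\ge\dots\ge w_n>0$. The Pareto front of MO-$F$ consists of exactly $n+1$ objective vectors, namely $\bigl(\sum_{k=1}^{j}w_k,\;c_j\bigr)$ for $j=0,1,\dots,n$, where $c_0=0$ and $c_j=2j-1$ for $j\ge1$; the empty tree and, for each $1\le i\le n$, any tree whose leaves are exactly $x_1,\dots,x_i$ (each once) are Pareto optimal.
   Context: Fix an integer $n\ge 1$ and real weights $w_1\ge w_2\ge\dots\ge w_n>0$. The terminal set is $T=\{x_1,\bar x_1,\dots,x_n,\bar x_n\}$ ($\bar x_i$ is the complement of $x_i$; $x_i$ is called positive). A syntax tree is either the empty tree or a rooted ordered binary tree whose inner nodes are all labelled by the binary function $J$ (join, exactly two ordered children) and whose leaves are labelled by elements of $T$. The complexity $C(X)$ is the number of nodes of $X$ (0 for the empty tree). The leaf list $l$ of $X$ is the sequence of leaf labels in an inorder traversal. WORDER: build a list $S$ by scanning $l$ from front to rear and appending a literal only if neither it nor its complement is already in $S$; WORDER$(X)=\sum_{i:\,x_i\in S} w_i$. WMAJORITY: WMAJORITY$(X)=\sum w_i$ over all $i$ such that $x_i$ occurs in $l$ at least once and at least as often as $\bar x_i$. MO-$F(X)=(F(X),C(X))$, $F$ maximized and $C$ minimized. $Y$ dominates $X$ iff $F(Y)\ge F(X)$, $C(Y)\le C(X)$ and at least one inequality is strict. A tree is Pareto optimal if no syntax tree dominates it; the Pareto front is the set of objective vectors of Pareto optimal trees. *)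

theory Defs
  imports Complex_Main "HOL-Library.Multiset"
begin

datatype lit = Pos nat | Neg nat

fun var :: "lit \<Rightarrow> nat" where
  "var (Pos i) = i" | "var (Neg i) = i"

fun compl :: "lit \<Rightarrow> lit" where
  "compl (Pos i) = Neg i" | "compl (Neg i) = Pos i"

text \<open>Nonempty syntax trees: leaves labelled by literals, inner nodes by J.
  A syntax tree is either the empty tree (None) or Some t.\<close>
datatype stree = Leaf lit | J stree stree

type_synonym syntax_tree = "stree option"

fun nodes :: "stree \<Rightarrow> nat" where
  "nodes (Leaf _) = 1" | "nodes (J a b) = nodes a + nodes b + 1"

definition C :: "syntax_tree \<Rightarrow> nat" where
  "C X = (case X of None \<Rightarrow> 0 | Some t \<Rightarrow> nodes t)"

fun leaves :: "stree \<Rightarrow> lit list" where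
  "leaves (Leaf l) = [l]" | "leaves (J a b) = leaves a @ leaves b"

definition leaf_list :: "syntax_tree \<Rightarrow> lit list" where
  "leaf_list X = (case X of None \<Rightarrow> [] | Some t \<Rightarrow> leaves t)"

text \<open>Syntax trees over the terminal set {x_1, ~x_1, ..., x_n, ~x_n}.\<close>
definition valid_tree :: "nat \<Rightarrow> syntax_tree \<Rightarrow> bool" where
  "valid_tree n X = (\<forall>l \<in> set (leaf_list X). var l \<in> {1..n})"

definition worder_step :: "lit list \<Rightarrow> lit \<Rightarrow> lit list" where
  "worder_step S l = (if l \<in> set S \<or> compl l \<in> set S then S else S @ [l])"

definition worder_list :: "lit list \<Rightarrow> lit list" where
  "worder_list l = foldl worder_step [] l"

definition worder :: "nat \<Rightarrow> (nat \<Rightarrow> real) \<Rightarrow> syntax_tree \<Rightarrow> real" where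
  "worder n w X = (\<Sum>i \<in> {i \<in> {1..n}. Pos i \<in> set (worder_list (leaf_list X))}. w i)"

definition wmajority :: "nat \<Rightarrow> (nat \<Rightarrow> real) \<Rightarrow> syntax_tree \<Rightarrow> real" where
  "wmajority n w X = (\<Sum>i \<in> {i \<in> {1..n}. count (mset (leaf_list X)) (Pos i) \<ge> 1
        \<and> count (mset (leaf_list X)) (Pos i) \<ge> count (mset (leaf_list X)) (Neg i)}. w i)"

definition dominates :: "(syntax_tree \<Rightarrow> real) \<Rightarrow> syntax_tree \<Rightarrow> syntax_tree \<Rightarrow> bool" where
  "dominates F Y X = (F Y \<ge> F X \<and> C Y \<le> C X \<and> (F Y > F X \<or> C Y < C X))"

definition pareto_optimal :: "nat \<Rightarrow> (syntax_tree \<Rightarrow> real) \<Rightarrow> syntax_tree \<Rightarrow> bool" where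
  "pareto_optimal n F X = (valid_tree n X \<and> \<not> (\<exists>Y. valid_tree n Y \<and> dominates F Y X))"

definition pareto_front :: "nat \<Rightarrow> (syntax_tree \<Rightarrow> real) \<Rightarrow> (real \<times> nat) set" where
  "pareto_front n F = {(F X, C X) | X. pareto_optimal n F X}"

definition cval :: "nat \<Rightarrow> nat" where
  "cval j = (if j = 0 then 0 else 2 * j - 1)"

end

theory Submission
  imports Defs
begin

text \<open>
  Write \<open>W j = w 1 + \<dots> + w j\<close> for the prefix weights.  A tree with \<open>L\<close> leaves has
  \<open>C = cval L\<close>, and for both objectives only positive literals \<open>x_i\<close> occurring as leaves can
  contribute \<open>w i\<close>; with at most \<open>min L n\<close> distinct such indices and decreasing weights this
  gives the upper bound \<open>F X \<le> W (min L n)\<close>.  Conversely, a tree whose leaves are exactly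
  \<open>x_1, \<dots>, x_j\<close> attains \<open>(W j, cval j)\<close>.  Since \<open>W\<close> is strictly increasing on \<open>{0..n}\<close> and
  \<open>cval\<close> strictly increasing, a valid tree is Pareto optimal iff its objective vector is
  \<open>(W j, cval j)\<close> for some \<open>j \<le> n\<close>.
\<close>

lemma compl_compl [simp]: "compl (compl x) = x"
  by (cases x) auto

lemma worder_scan_subset: "set (foldl worder_step S l) \<subseteq> set S \<union> set l"
proof (induction l arbitrary: S)
  case (Cons a l)
  have "set (worder_step S a) \<subseteq> set S \<union> {a}"
    by (auto simp: worder_step_def)
  with Cons.IH[of "worder_step S a"] show ?case by auto
qed simp

lemma worder_scan_covers:
  "x \<in> set S \<union> set l \<Longrightarrow> x \<in> set (foldl worder_step S l) \<or> compl x \<in> set (foldl worder_step S l)"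
proof (induction l arbitrary: S x)
  case (Cons a l)
  let ?S = "worder_step S a"
  have "x \<in> set ?S \<or> compl x \<in> set ?S \<or> x \<in> set l"
    using Cons.prems by (auto simp: worder_step_def)
  then show ?case
    using Cons.IH[of x ?S] Cons.IH[of "compl x" ?S] by auto
qed simp

lemma worder_keeps_unopposed:
  assumes "Pos k \<in> set l" and "Neg k \<notin> set l"
  shows "Pos k \<in> set (worder_list l)"
  using assms worder_scan_covers[of "Pos k" "[]" l] worder_scan_subset[of "[]" l]
  unfolding worder_list_def by auto

lemma nodes_leaves: "nodes t + 1 = 2 * length (leaves t)"
  by (induction t) auto

lemma leaves_nonempty: "leaves t \<noteq> []"
  by (induction t) auto

lemma C_eq_cval: "C X = cval (length (leaf_list X))"
proof (cases X)
  case (Some t)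
  have "length (leaves t) \<noteq> 0"
    using leaves_nonempty[of t] by simp
  with nodes_leaves[of t] show ?thesis
    by (simp add: Some C_def cval_def leaf_list_def)
qed (simp add: C_def cval_def leaf_list_def)

lemma cval_le_iff: "cval a \<le> cval b \<longleftrightarrow> a \<le> b"
  by (auto simp: cval_def)

lemma cval_inj: "inj cval"
  by (rule injI) (auto simp: cval_def split: if_splits)

fun comb :: "lit \<Rightarrow> lit list \<Rightarrow> stree" where
  "comb a [] = Leaf a"
| "comb a (b # bs) = J (Leaf a) (comb b bs)"

lemma leaves_comb: "leaves (comb a bs) = a # bs"
  by (induction bs arbitrary: a) auto

lemma leaf_list_surj: "\<exists>X. leaf_list X = l"
proof (cases l)
  case Nil
  then show ?thesis by (intro exI[of _ None]) (simp add: leaf_list_def)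
next
  case (Cons a bs)
  then show ?thesis
    by (intro exI[of _ "Some (comb a bs)"]) (simp add: leaf_list_def leaves_comb)
qed

lemma prefix_sum_strict_mono:
  fixes w :: "nat \<Rightarrow> real"
  assumes pos: "\<And>i. 1 \<le> i \<Longrightarrow> i \<le> N \<Longrightarrow> w i > 0"
  shows "a < b \<Longrightarrow> b \<le> N \<Longrightarrow> (\<Sum>k=1..a. w k) < (\<Sum>k=1..b. w k)"
proof (induction b)
  case (Suc b)
  have "(\<Sum>k=1..a. w k) \<le> (\<Sum>k=1..b. w k)"
    using Suc by (cases "a = b") auto
  moreover have "w (Suc b) > 0"
    using pos Suc.prems by auto
  ultimately show ?case by (simp add: sum.cl_ivl_Suc)
qed simp

lemma prefix_sum_mono:
  fixes w :: "nat \<Rightarrow> real"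
  assumes pos: "\<And>i. 1 \<le> i \<Longrightarrow> i \<le> N \<Longrightarrow> w i > 0" and "a \<le> b" and "b \<le> N"
  shows "(\<Sum>k=1..a. w k) \<le> (\<Sum>k=1..b. w k)"
proof (cases "a = b")
  case False
  with \<open>a \<le> b\<close> have "a < b" by simp
  from prefix_sum_strict_mono[where w = w and N = N, OF pos this \<open>b \<le> N\<close>] show ?thesis by simp
qed simp

lemma sum_le_prefix_sum:
  fixes w :: "nat \<Rightarrow> 'a::ordered_comm_monoid_add"
  assumes dec: "\<And>i j. 1 \<le> i \<Longrightarrow> i \<le> j \<Longrightarrow> j \<le> N \<Longrightarrow> w j \<le> w i"
  shows "m \<le> N \<Longrightarrow> S \<subseteq> {1..m} \<Longrightarrow> sum w S \<le> (\<Sum>k=1..card S. w k)"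
proof (induction m arbitrary: S)
  case (Suc m)
  show ?case
  proof (cases "Suc m \<in> S")
    case False
    then have "S \<subseteq> {1..m}"
      using Suc.prems by (auto simp: subset_iff le_Suc_eq)
    then show ?thesis using Suc by auto
  next
    case True
    define S' where "S' = S - {Suc m}"
    have S': "S' \<subseteq> {1..m}" "finite S'" "Suc m \<notin> S'"
      using Suc.prems finite_subset[OF Suc.prems(2)] by (auto simp: S'_def)
    have S: "S = insert (Suc m) S'"
      using True by (auto simp: S'_def)
    have "card S' \<le> m"
      using card_mono[OF _ S'(1)] by simp
    then have "w (Suc m) \<le> w (Suc (card S'))"
      using dec Suc.prems by auto
    moreover have "sum w S' \<le> (\<Sum>k=1..card S'. w k)"
      using Suc S' by auto
    ultimately have "sum w S' + w (Suc m) \<le> (\<Sum>k=1..card S'. w k) + w (Suc (card S'))"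
      by (intro add_mono)
    then show ?thesis
      using S S' by (simp add: sum.cl_ivl_Suc add.commute)
  qed
qed simp

locale weighted_objective =
  fixes n :: nat and w :: "nat \<Rightarrow> real" and F :: "syntax_tree \<Rightarrow> real"
  assumes decreasing: "\<And>i j. 1 \<le> i \<Longrightarrow> i \<le> j \<Longrightarrow> j \<le> n \<Longrightarrow> w j \<le> w i"
    and positive: "\<And>i. 1 \<le> i \<Longrightarrow> i \<le> n \<Longrightarrow> w i > 0"
    and objective: "F = worder n w \<or> F = wmajority n w"
begin

lemma F_le_present_weights: "F X \<le> sum w {i \<in> {1..n}. Pos i \<in> set (leaf_list X)}"
proof -
  let ?P = "{i \<in> {1..n}. Pos i \<in> set (leaf_list X)}"
  have nonneg: "\<forall>i \<in> ?P. 0 \<le> w i"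
    using positive by (auto intro: less_imp_le)
  from objective show ?thesis
  proof
    assume F: "F = worder n w"
    have "{i \<in> {1..n}. Pos i \<in> set (worder_list (leaf_list X))} \<subseteq> ?P"
      using worder_scan_subset[of "[]" "leaf_list X"] by (auto simp: worder_list_def)
    then show ?thesis
      unfolding F worder_def using nonneg by (intro sum_mono2) auto
  next
    assume F: "F = wmajority n w"
    have "{i \<in> {1..n}. count (mset (leaf_list X)) (Pos i) \<ge> 1
        \<and> count (mset (leaf_list X)) (Pos i) \<ge> count (mset (leaf_list X)) (Neg i)} \<subseteq> ?P"
      by (auto simp: Suc_le_eq)
    then show ?thesis
      unfolding F wmajority_def using nonneg by (intro sum_mono2) auto
  qed
qed

lemma F_le_prefix_sum: "F X \<le> (\<Sum>k=1..min (length (leaf_list X)) n. w k)"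
proof -
  let ?P = "{i \<in> {1..n}. Pos i \<in> set (leaf_list X)}"
  have "card ?P = card (Pos ` ?P)"
    by (simp add: card_image inj_on_def)
  also have "\<dots> \<le> card (set (leaf_list X))"
    by (rule card_mono) auto
  also have "\<dots> \<le> length (leaf_list X)"
    by (rule card_length)
  finally have "card ?P \<le> min (length (leaf_list X)) n"
    using card_mono[of "{1..n}" ?P] by fastforce
  have "F X \<le> sum w ?P"
    by (rule F_le_present_weights)
  also have "\<dots> \<le> (\<Sum>k=1..card ?P. w k)"
    by (rule sum_le_prefix_sum[OF decreasing, where m = n]) auto
  also have "\<dots> \<le> (\<Sum>k=1..min (length (leaf_list X)) n. w k)"
    using \<open>card ?P \<le> _\<close> by (intro prefix_sum_mono[OF positive]) auto
  finally show ?thesis .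
qed

lemma prefix_tree_values:
  assumes i: "i \<le> n" and X: "mset (leaf_list X) = mset (map Pos [1..<i+1])"
  shows "valid_tree n X \<and> F X = (\<Sum>k=1..i. w k) \<and> C X = cval i"
proof -
  have leaf_set: "set (leaf_list X) = Pos ` {1..i}"
    using arg_cong[OF X, of set_mset] by auto
  have "distinct (map Pos [1..<i+1])"
    by (simp add: distinct_map inj_on_def)
  then have count: "\<And>a. count (mset (leaf_list X)) a = (if a \<in> Pos ` {1..i} then 1 else 0)"
    unfolding X distinct_count_atmost_1 by auto
  have "F X = (\<Sum>k=1..i. w k)"
    using objective
  proof
    assume F: "F = worder n w"
    have "{k \<in> {1..n}. Pos k \<in> set (worder_list (leaf_list X))} = {1..i}"
      using worder_scan_subset[of "[]" "leaf_list X"] worder_keeps_unopposed[of _ "leaf_list X"]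
        leaf_set i by (force simp: worder_list_def)
    then show ?thesis by (simp add: F worder_def)
  next
    assume F: "F = wmajority n w"
    have "{k \<in> {1..n}. count (mset (leaf_list X)) (Pos k) \<ge> 1
        \<and> count (mset (leaf_list X)) (Pos k) \<ge> count (mset (leaf_list X)) (Neg k)} = {1..i}"
      unfolding count using i by auto
    then show ?thesis by (simp add: F wmajority_def)
  qed
  moreover have "length (leaf_list X) = i"
    using arg_cong[OF X, of size] by simp
  ultimately show ?thesis
    using leaf_set i by (auto simp: valid_tree_def C_eq_cval)
qed

lemma prefix_vector_attained:
  assumes "j \<le> n"
  shows "\<exists>X. valid_tree n X \<and> F X = (\<Sum>k=1..j. w k) \<and> C X = cval j"
  using leaf_list_surj[of "map Pos [1..<j+1]"] prefix_tree_values[OF assms] by metis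

lemma pareto_optimal_iff:
  "pareto_optimal n F X \<longleftrightarrow>
     valid_tree n X \<and> (\<exists>j\<le>n. F X = (\<Sum>k=1..j. w k) \<and> C X = cval j)"
proof
  assume opt: "pareto_optimal n F X"
  define j where "j = min (length (leaf_list X)) n"
  obtain T where T: "valid_tree n T" "F T = (\<Sum>k=1..j. w k)" "C T = cval j"
    using prefix_vector_attained[of j] by (auto simp: j_def)
  have "F X \<le> (\<Sum>k=1..j. w k)" and "cval j \<le> C X"
    using F_le_prefix_sum[of X] by (simp_all add: j_def C_eq_cval cval_le_iff)
  moreover have "\<not> dominates F T X"
    using opt T(1) by (auto simp: pareto_optimal_def)
  ultimately have "F X = (\<Sum>k=1..j. w k) \<and> C X = cval j"
    using T by (auto simp: dominates_def)
  moreover have "j \<le> n"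
    by (simp add: j_def)
  ultimately show "valid_tree n X \<and> (\<exists>j\<le>n. F X = (\<Sum>k=1..j. w k) \<and> C X = cval j)"
    using opt by (auto simp: pareto_optimal_def)
next
  assume "valid_tree n X \<and> (\<exists>j\<le>n. F X = (\<Sum>k=1..j. w k) \<and> C X = cval j)"
  then obtain j where v: "valid_tree n X" and j: "j \<le> n"
    and FX: "F X = (\<Sum>k=1..j. w k)" and CX: "C X = cval j" by blast
  have "\<not> dominates F Y X" for Y
  proof
    assume dom: "dominates F Y X"
    let ?L = "length (leaf_list Y)"
    have "cval ?L \<le> cval j"
      using dom CX by (simp add: dominates_def flip: C_eq_cval)
    then have "?L \<le> j"
      by (simp only: cval_le_iff)
    then have FY: "F Y \<le> (\<Sum>k=1..?L. w k)"
      using F_le_prefix_sum[of Y] j by (simp add: min_absorb1)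
    show False
    proof (cases "?L < j")
      case True
      then show False
        using prefix_sum_strict_mono[where w = w and N = n, OF positive True j] dom FY FX by (simp add: dominates_def)
    next
      case False
      then show False
        using \<open>?L \<le> j\<close> dom FY FX CX by (auto simp: dominates_def C_eq_cval)
    qed
  qed
  with v show "pareto_optimal n F X"
    by (auto simp: pareto_optimal_def)
qed

lemma pareto_front_eq: "pareto_front n F = (\<lambda>j. ((\<Sum>k=1..j. w k), cval j)) ` {..n}"
proof
  show "pareto_front n F \<subseteq> (\<lambda>j. ((\<Sum>k=1..j. w k), cval j)) ` {..n}"
    unfolding pareto_front_def pareto_optimal_iff by auto
  show "(\<lambda>j. ((\<Sum>k=1..j. w k), cval j)) ` {..n} \<subseteq> pareto_front n F"
  proof
    fix p assume "p \<in> (\<lambda>j. ((\<Sum>k=1..j. w k), cval j)) ` {..n}"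
    then obtain j where "j \<in> {..n}" and p: "p = ((\<Sum>k=1..j. w k), cval j)"
      by blast
    then obtain X where "valid_tree n X" "F X = (\<Sum>k=1..j. w k)" "C X = cval j"
      using prefix_vector_attained by auto
    with \<open>j \<in> {..n}\<close> show "p \<in> pareto_front n F"
      unfolding p pareto_front_def pareto_optimal_iff by force
  qed
qed

end

text \<open>The empty tree is the case \<open>i = 0\<close> of the prefix trees.\<close>

theorem mainTheorem8:
  fixes n :: nat and w :: "nat \<Rightarrow> real" and F :: "syntax_tree \<Rightarrow> real"
  assumes "n \<ge> 1"
    and "\<And>i j. 1 \<le> i \<Longrightarrow> i \<le> j \<Longrightarrow> j \<le> n \<Longrightarrow> w j \<le> w i"
    and "\<And>i. 1 \<le> i \<Longrightarrow> i \<le> n \<Longrightarrow> w i > 0"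
    and "F = worder n w \<or> F = wmajority n w"
  shows "pareto_front n F = {((\<Sum>k=1..j. w k), cval j) | j. j \<le> n}
    \<and> card (pareto_front n F) = n + 1
    \<and> pareto_optimal n F None
    \<and> (\<forall>i X. 1 \<le> i \<and> i \<le> n \<and> mset (leaf_list X) = mset (map Pos [1..<i+1])
           \<longrightarrow> pareto_optimal n F X)"
proof -
  interpret weighted_objective n w F
    using assms(2-4) by unfold_locales
  let ?v = "\<lambda>j. ((\<Sum>k=1..j. w k), cval j)"
  have "inj_on ?v {..n}"
    using cval_inj by (auto intro: inj_onI dest: injD)
  then have "card (pareto_front n F) = n + 1"
    unfolding pareto_front_eq by (simp add: card_image)
  moreover have "pareto_optimal n F X"
    if "i \<le> n" and "mset (leaf_list X) = mset (map Pos [1..<i+1])" for i X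
    using prefix_tree_values[OF that] that(1) pareto_optimal_iff by blast
  moreover have "mset (leaf_list None) = mset (map Pos [1..<0+1])"
    by (simp add: leaf_list_def)
  moreover have "{((\<Sum>k=1..j. w k), cval j) | j. j \<le> n} = ?v ` {..n}"
    by auto
  ultimately show ?thesis
    using pareto_front_eq by blast
qed

end
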